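(* If there exists a natural number $n>60$ with $\sigma(n)\ge\exp(H_n)\log(H_n)$ (a counterexample to the Kaneko–Lagarias inequality), then the smallest such counterexample is a superabundant number. Consequently, the Kaneko–Lagarias inequality $\sigma(n)<\exp(H_n)\log(H_n)$ holds for all $n>60$ if and only if it holds for all superabundant $n>60$.
   Context: $\sigma(n)=\sum_{d\mid n}d$ is the sum-of-divisors function and $H_n=1+\frac12+\cdots+\frac1n$ is the $n$-th harmonic number. A natural number $n$ is superabundant if $\sigma(m)/m<\sigma(n)/n$ for all natural numbers $m<n$. *)

theory Defs
  imports "HOL-Analysis.Analysis"
begin

definition sigma :: "nat \<Rightarrow> nat" where
  "sigma n = (\<Sum>d | d dvd n. d)"

definition superabundant :: "nat \<Rightarrow> bool" where
  "superabundant n \<longleftrightarrow> n \<ge> 1 \<and>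
     (\<forall>m. 1 \<le> m \<and> m < n \<longrightarrow> real (sigma m) / real m < real (sigma n) / real n)"

definition KL_counterexample :: "nat \<Rightarrow> bool" where
  "KL_counterexample n \<longleftrightarrow> n > 60 \<and> real (sigma n) \<ge> exp (harm n) * ln (harm n)"

end

theory Submission
  imports Defs
begin

text \<open>
  Write \<open>F n = exp (H\<^sub>n) ln (H\<^sub>n)\<close>. The key fact is that \<open>F n / n\<close> is non-decreasing
  for \<open>n \<ge> 61\<close>: going from \<open>n\<close> to \<open>n + 1\<close> multiplies \<open>exp (H\<^sub>n)\<close> by at least
  \<open>1 + 1/(n+1)\<close>, and the small increase of \<open>ln (H\<^sub>n)\<close> covers the remaining factor because
  \<open>H\<^sub>n\<^sub>+\<^sub>1 ln (H\<^sub>n) \<le> (1 + L) L\<close>, \<open>L = ln (n + 1)\<close>, is less than \<open>n - 1\<close>.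

  Let \<open>N\<close> be the least counterexample and \<open>m < N\<close>. If \<open>m > 60\<close>, then
  \<open>\<sigma>(m)/m < F(m)/m \<le> F(N)/N \<le> \<sigma>(N)/N\<close>. If \<open>m \<le> 60\<close>, then \<open>\<sigma>(m)/m \<le> 14/5\<close>; since no
  \<open>n\<close> in \<open>61..71\<close> is a counterexample, \<open>N \<ge> 72\<close> and \<open>\<sigma>(N)/N \<ge> F(N)/N \<ge> F(72)/72 > 14/5\<close>.
\<close>

definition KL_bound :: "nat \<Rightarrow> real" where
  "KL_bound n = exp (harm n) * ln (harm n)"

lemma KL_counterexample_iff: "KL_counterexample n \<longleftrightarrow> n > 60 \<and> KL_bound n \<le> real (sigma n)"
  by (simp add: KL_counterexample_def KL_bound_def)

lemma exp_ge_sum_fact: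
  fixes x :: real
  assumes "x \<ge> 0"
  shows "(\<Sum>k<N. x ^ k / fact k) \<le> exp x"
proof -
  have "(\<Sum>k<N. x ^ k / fact k) \<le> (\<Sum>k. x ^ k / fact k)"
    using assms summable_exp[of x] by (intro sum_le_suminf) (auto simp: divide_simps)
  also have "\<dots> = exp x" by (simp add: exp_def field_simps)
  finally show ?thesis .
qed

lemma ln_2_ge: "ln (2::real) \<ge> 693/1000"
proof -
  from ln_approx_bounds[of 2 3] have "ln (2::real) \<ge> (\<Sum>k<3. 2 * (1/3) ^ (2*k+1) / of_nat (2*k+1))"
    by simp
  then show ?thesis by (simp add: eval_nat_numeral)
qed

lemma ln_3_ge: "ln (3::real) \<ge> 1098/1000"
proof -
  from ln_approx_bounds[of 3 5] have "ln (3::real) \<ge> (\<Sum>k<5. 2 * (1/2) ^ (2*k+1) / of_nat (2*k+1))"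
    by simp
  then show ?thesis by (simp add: eval_nat_numeral)
qed

lemma ln_mult_one_plus_ln_le:
  fixes t :: real
  assumes "t \<ge> 62"
  shows "ln t * (1 + ln t) \<le> t - 2"
proof -
  define q where "q = root 4 t"
  have q0: "q > 0" and q4: "q ^ 4 = t" using assms by (simp_all add: q_def)
  have ln_t: "ln t = 4 * ln q" using q4 q0 by (metis ln_realpow of_nat_numeral)
  have "ln q \<le> q - 1" using q0 by (rule ln_le_minus_one)
  moreover have "ln q \<ge> 0" using ln_t assms ln_gt_zero[of t] by linarith
  ultimately have "ln t * (1 + ln t) \<le> (4 * (q - 1)) * (1 + 4 * (q - 1))"
    using ln_t by (intro mult_mono) auto
  also have "\<dots> \<le> q ^ 4 - 2"
  proof -
    have "q \<ge> 14/5"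
    proof (rule ccontr)
      assume "\<not> q \<ge> 14/5"
      then have "q ^ 4 < (14/5) ^ 4" using q0 by (intro power_strict_mono) auto
      then show False using q4 assms by (simp add: power4_eq_xxxx)
    qed
    define d where "d = q - 14/5"
    have "d \<ge> 0" and q_eq: "q = d + 14/5" using \<open>q \<ge> 14/5\<close> by (simp_all add: d_def)
    have "q ^ 4 - 2 - (4 * (q - 1)) * (1 + 4 * (q - 1))
          = 266/625 + 3276/125 * d + 776/25 * d^2 + 56/5 * d^3 + d^4"
      unfolding q_eq by (simp add: field_simps power2_eq_square power3_eq_cube power4_eq_xxxx)
    moreover have "0 \<le> 266/625 + 3276/125 * d + 776/25 * d^2 + 56/5 * d^3 + d^4"
      using \<open>d \<ge> 0\<close> by simp
    ultimately show ?thesis by linarith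
  qed
  finally show ?thesis using q4 by simp
qed

lemma harm_ge_euler_mascheroni:
  assumes "n > 0"
  shows "harm n \<ge> euler_mascheroni + ln (real n + 1) - 1 / (2 * real n)"
  using euler_mascheroni_upper[of "n - 1"] assms by (simp add: add.commute)

lemma harm_le_one_plus_ln:
  assumes "n > 0"
  shows "harm n \<le> 1 + ln (real n)"
  using euler_mascheroni_sequence_decreasing[of 1 n] assms by (simp add: harm_expand)

lemma harm_Suc_mult_ln_harm_le:
  assumes k: "k \<ge> 61"
  shows "(real k + 1) * harm (Suc k) * ln (harm k) \<le> real k * (real k + 2)"
proof -
  define L where "L = ln (real k + 1)"
  have "harm 2 \<le> (harm k :: real)" using k by (intro harm_mono) simp
  then have H: "harm k \<ge> (3/2 :: real)" by (simp add: harm_expand)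
  have Hp: "harm (Suc k) \<le> 1 + L"
    using harm_le_one_plus_ln[of "Suc k"] by (simp add: L_def add.commute)
  have "ln (harm k) \<le> harm k - (1::real)" using H by (intro ln_le_minus_one) linarith
  also have "\<dots> \<le> L" using Hp harm_mono[of k "Suc k", where 'a = real] by simp
  finally have "harm (Suc k) * ln (harm k) \<le> (1 + L) * L"
    using Hp H harm_pos[of "Suc k"] by (intro mult_mono) (auto simp: L_def)
  also have "\<dots> \<le> real k - 1"
    using ln_mult_one_plus_ln_le[of "real k + 1"] k by (simp add: L_def mult.commute)
  finally have "(real k + 1) * (harm (Suc k) * ln (harm k)) \<le> (real k + 1) * (real k - 1)"
    by (intro mult_left_mono) auto
  then show ?thesis by (simp add: algebra_simps)
qed

lemma ratio_step_inequality:
  fixes k h a :: real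
  assumes "k > 0" "h > 0" "a \<ge> 0" "(k + 1) * h * a \<le> k * (k + 2)"
  shows "a * (k + 1) \<le> k * (1 + 1 / (k + 1)) * (a + 1 / ((k + 1) * h))"
proof -
  have "a / (k + 1) = (k + 1) * h * a / ((k + 1)^2 * h)"
    using assms by (simp add: divide_simps power2_eq_square)
  also have "\<dots> \<le> k * (k + 2) / ((k + 1)^2 * h)"
    using assms by (intro divide_right_mono) auto
  finally have "a / (k + 1) \<le> k * (k + 2) / ((k + 1)^2 * h)" .
  moreover have "a * (k + 1) = k * (k + 2) / (k + 1) * a + a / (k + 1)"
    and "k * (1 + 1 / (k + 1)) * (a + 1 / ((k + 1) * h))
         = k * (k + 2) / (k + 1) * a + k * (k + 2) / ((k + 1)^2 * h)"
    using assms by (simp_all add: divide_simps power2_eq_square) (simp_all add: algebra_simps)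
  ultimately show ?thesis by linarith
qed

lemma KL_bound_ratio_Suc_ge:
  assumes k: "k \<ge> 61"
  shows "KL_bound k / real k \<le> KL_bound (Suc k) / real (Suc k)"
proof -
  define H :: real where "H = harm k"
  define x :: real where "x = 1 / (real k + 1)"
  define Hp :: real where "Hp = harm (Suc k)"
  have Hp: "Hp = H + x" by (simp add: Hp_def H_def x_def harm_Suc inverse_eq_divide)
  have x0: "x > 0" by (simp add: x_def)
  have "harm 2 \<le> H" unfolding H_def using k by (intro harm_mono) simp
  then have H32: "H \<ge> 3/2" by (simp add: harm_expand)
  then have H0: "ln H > 0" and Hp0: "Hp > 0" using Hp x0 by simp_all
  have exp_Hp: "exp H * (1 + x) \<le> exp Hp"
    unfolding Hp exp_add by (intro mult_left_mono) (auto simp: exp_ge_add_one_self add.commute)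
  have "ln (H / Hp) \<le> H / Hp - 1" using H32 Hp0 by (intro ln_le_minus_one) simp
  then have ln_Hp: "ln H + x / Hp \<le> ln Hp"
    using H32 Hp0 Hp by (simp add: ln_div field_simps)
  have "ln H * (real k + 1) \<le> real k * (1 + x) * (ln H + x / Hp)"
    using ratio_step_inequality[of "real k" Hp "ln H"] harm_Suc_mult_ln_harm_le[OF k] k Hp0 H0
    by (simp add: x_def H_def Hp_def)
  then have "exp H * (ln H * (real k + 1)) / (real k * (real k + 1))
      \<le> exp H * (real k * (1 + x) * (ln H + x / Hp)) / (real k * (real k + 1))"
    by (intro divide_right_mono mult_left_mono) auto
  then have "KL_bound k / real k \<le> exp H * (1 + x) * (ln H + x / Hp) / (real k + 1)"
    using k by (simp add: KL_bound_def H_def mult_ac)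
  also have "\<dots> \<le> exp Hp * ln Hp / (real k + 1)"
    using exp_Hp ln_Hp x0 H0 Hp0 by (intro divide_right_mono mult_mono) auto
  finally show ?thesis by (simp add: KL_bound_def Hp_def add.commute)
qed

lemma KL_bound_ratio_mono:
  assumes "61 \<le> a" "a \<le> b"
  shows "KL_bound a / real a \<le> KL_bound b / real b"
  by (rule lift_Suc_mono_le_ivl[of "{61..}"]) (use assms KL_bound_ratio_Suc_ge in auto)

lemma sigma_eq_sum_list_filter_dvd:
  assumes "n > 0"
  shows "sigma n = sum_list (filter (\<lambda>d. d dvd n) [1..<Suc n])"
proof -
  have "{d. d dvd n} = set (filter (\<lambda>d. d dvd n) [1..<Suc n])"
    using assms by (auto intro: dvd_imp_le intro!: Nat.gr0I)
  then show ?thesis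
    unfolding sigma_def using sum.distinct_set_conv_list[of "filter (\<lambda>d. d dvd n) [1..<Suc n]" "\<lambda>d. d"]
    by simp
qed

lemma sigma_ratio_le_up_to_60:
  assumes "1 \<le> m" "m \<le> 60"
  shows "real (sigma m) / real m \<le> 14/5"
proof -
  have "list_all (\<lambda>m. 5 * sum_list (filter (\<lambda>d. d dvd m) [1..<Suc m]) \<le> 14 * m) [1..<61]"
    by code_simp
  then have "5 * sigma m \<le> 14 * m"
    using assms unfolding list_all_iff set_upt by (simp add: sigma_eq_sum_list_filter_dvd)
  then have "5 * real (sigma m) \<le> 14 * real m" by linarith
  then show ?thesis using assms by (simp add: divide_simps)
qed

lemma sigma_less_61_to_71:
  assumes "61 \<le> m" "m \<le> 71"
  shows "3 * real (sigma m) < 7 * (real m + 1)"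
proof -
  have "list_all (\<lambda>m. 3 * sum_list (filter (\<lambda>d. d dvd m) [1..<Suc m]) < 7 * (m + 1)) [61..<72]"
    by code_simp
  then have "3 * sigma m < 7 * (m + 1)"
    using assms unfolding list_all_iff set_upt by (simp add: sigma_eq_sum_list_filter_dvd)
  then have "real (3 * sigma m) < real (7 * (m + 1))" by (simp only: of_nat_less_iff)
  then show ?thesis by simp
qed

lemma KL_bound_72: "KL_bound 72 / 72 > 14/5"
proof -
  have "ln (72::real) = ln (2^3 * 3^2)" by simp
  also have "\<dots> = 3 * ln 2 + 2 * ln 3" by (simp only: ln_mult ln_realpow) simp_all
  finally have ln_72: "ln (72::real) = 3 * ln 2 + 2 * ln 3" .
  have "ln (72/73::real) \<le> 72/73 - 1" by (intro ln_le_minus_one) simp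
  then have "ln (73::real) \<ge> ln 72 + 1/73" by (simp add: ln_div)
  moreover have "harm 72 \<ge> euler_mascheroni + ln (73::real) - 1/144"
    using harm_ge_euler_mascheroni[of 72] by simp
  ultimately have H: "harm 72 \<ge> (971/200::real)"
    using euler_mascheroni_gt_19_over_33 ln_72 ln_2_ge ln_3_ge by linarith
  have "(\<Sum>k<13. (971/200::real) ^ k / fact k) \<ge> 128" by (simp add: eval_nat_numeral)
  then have "exp (971/200::real) \<ge> 128" using exp_ge_sum_fact[of "971/200" 13] by simp
  moreover have "exp (harm 72) \<ge> exp (971/200::real)" using H by simp
  ultimately have exp_H: "exp (harm 72) \<ge> (128::real)" by linarith
  define y :: real where "y = 971/200"
  from ln_approx_bounds[of y 8]
  have "ln y \<ge> (\<Sum>k<8. 2 * ((y - 1) / (y + 1)) ^ (2*k+1) / of_nat (2*k+1))"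
    by (simp add: y_def)
  then have "ln (971/200::real) \<ge> 1579/1000" by (simp add: y_def eval_nat_numeral)
  moreover have "ln (harm 72) \<ge> ln (971/200::real)" using H by simp
  ultimately have "ln (harm 72) \<ge> (1579/1000::real)" by linarith
  then have "exp (harm 72) * ln (harm 72) \<ge> 128 * (1579/1000::real)"
    using exp_H by (intro mult_mono) auto
  then show ?thesis unfolding KL_bound_def by simp
qed

lemma sigma_less_KL_bound_61_to_71:
  assumes "61 \<le> m" "m \<le> 71"
  shows "real (sigma m) < KL_bound m"
proof -
  define c :: real where "c = 19/33 - 1/122"
  have "1 / (2 * real m) \<le> 1/122" using assms by (simp add: divide_simps)
  then have H: "harm m \<ge> c + ln (real m + 1)"
    using harm_ge_euler_mascheroni[of m] assms euler_mascheroni_gt_19_over_33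
    unfolding c_def by linarith
  have "(\<Sum>k<5. c ^ k / fact k) \<ge> 7/4" by (simp add: c_def eval_nat_numeral)
  then have "exp c \<ge> 7/4" using exp_ge_sum_fact[of c 5] by (simp add: c_def)
  then have "exp c * (real m + 1) \<ge> 7/4 * (real m + 1)" by (intro mult_right_mono) auto
  moreover have "exp (harm m) \<ge> exp (c + ln (real m + 1))" using H by simp
  then have "exp (harm m) \<ge> exp c * (real m + 1)" by (simp add: exp_add)
  ultimately have exp_H: "exp (harm m) \<ge> 7/4 * (real m + 1)" by linarith
  have "ln (48::real) = ln (2^4 * 3)" by simp
  also have "\<dots> = 4 * ln 2 + ln 3" by (simp only: ln_mult ln_realpow) simp_all
  finally have "4 * ln 2 + ln 3 \<le> ln (real m + 1)"
    using ln_le_cancel_iff[of 48 "real m + 1"] assms by simp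
  then have "harm m \<ge> (4::real)" using H ln_2_ge ln_3_ge unfolding c_def by linarith
  then have "ln (harm m) \<ge> ln (4::real)" using assms by (subst ln_le_cancel_iff) auto
  moreover have "ln (4::real) = 2 * ln 2" using ln_realpow[of 2 2] by simp
  ultimately have "ln (harm m :: real) \<ge> 4/3" using ln_2_ge by linarith
  then have "KL_bound m \<ge> 7/4 * (real m + 1) * (4/3)"
    unfolding KL_bound_def using exp_H by (intro mult_mono) auto
  then show ?thesis using sigma_less_61_to_71[OF assms] by linarith
qed

lemma KL_counterexample_ge_72: "KL_counterexample N \<Longrightarrow> N \<ge> 72"
  using sigma_less_KL_bound_61_to_71[of N] by (fastforce simp: KL_counterexample_iff)

lemma superabundant_Least_KL_counterexample:
  assumes "\<exists>n. KL_counterexample n"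
  shows "superabundant (LEAST n. KL_counterexample n)"
proof -
  define N where "N = (LEAST n. KL_counterexample n)"
  have "KL_counterexample N" unfolding N_def using assms by (rule LeastI_ex)
  then have N: "N \<ge> 72" "KL_bound N / real N \<le> real (sigma N) / real N"
    using KL_counterexample_ge_72 by (auto simp: KL_counterexample_iff divide_right_mono)
  have "real (sigma m) / real m < real (sigma N) / real N" if m: "1 \<le> m" "m < N" for m
  proof (cases "m \<le> 60")
    case True
    then show ?thesis
      using sigma_ratio_le_up_to_60[OF m(1)] KL_bound_72 KL_bound_ratio_mono[of 72 N] N by simp
  next
    case False
    have "\<not> KL_counterexample m" using m(2) not_less_Least unfolding N_def by blast
    then have "real (sigma m) / real m < KL_bound m / real m"
      using False m by (simp add: KL_counterexample_iff divide_strict_right_mono)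
    also have "\<dots> \<le> real (sigma N) / real N"
      using KL_bound_ratio_mono[of m N] False m N by simp
    finally show ?thesis .
  qed
  with N show ?thesis unfolding superabundant_def N_def[symmetric] by simp
qed

theorem mainTheorem19:
  shows "((\<exists>n. KL_counterexample n) \<longrightarrow> superabundant (LEAST n. KL_counterexample n))
     \<and> ((\<forall>n>60. real (sigma n) < exp (harm n) * ln (harm n)) \<longleftrightarrow>
        (\<forall>n>60. superabundant n \<longrightarrow> real (sigma n) < exp (harm n) * ln (harm n)))"
proof -
  have "\<forall>n>60. real (sigma n) < exp (harm n) * ln (harm n)"
    if sa: "\<forall>n>60. superabundant n \<longrightarrow> real (sigma n) < exp (harm n) * ln (harm n)"
  proof (rule ccontr)
    assume "\<not> ?thesis"
    then have ex: "\<exists>n. KL_counterexample n" by (auto simp: KL_counterexample_def not_less)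
    then have "KL_counterexample (LEAST n. KL_counterexample n)" by (rule LeastI_ex)
    with superabundant_Least_KL_counterexample[OF ex] sa show False
      by (force simp: KL_counterexample_def)
  qed
  then show ?thesis using superabundant_Least_KL_counterexample by blast
qed

end
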